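(* Let $f\in\mathcal A_C$ and $g\in L^1$, and define $F(x)=\int_{-\infty}^xf$ and $G(x)=\int_{-\infty}^xg$. Then $f*G\in C^0(\overline{\mathbb R})$ and $f*G(x)=F*g(x)$ for all $x\in\mathbb R$, where $F*g(x)=\int_{-\infty}^\infty F(x-y)g(y)\,dy$ is a Lebesgue integral.
   Context: $C^0(\overline{\mathbb R})$: continuous $F:\mathbb R\to\mathbb R$ with finite limits $F(\pm\infty)$. $\mathcal B_C=\{F\in C^0(\overline{\mathbb R}):F(-\infty)=0\}$; $\mathcal A_C=\{f\in\mathcal D'(\mathbb R): f=F'\text{ (distributional derivative) for some } F\in\mathcal B_C\}$, the primitive being unique, $\int_a^bf=F(b)-F(a)$. Note $G$ is absolutely continuous and of bounded variation. For $h\in\mathcal A_C$ with primitive $H$ and $g$ of bounded variation, $\int_{-\infty}^\infty hg=H(\infty)g(\infty)-\int_{-\infty}^\infty H\,dg$ (Henstock–Stieltjes). For $f\in\mathcal A_C$ with primitive $F$, $f(x-\cdot)$ is the element of $\mathcal A_C$ with primitive $y\mapsto F(\infty)-F(x-y)$, and for $G$ of bounded variation $f*G(x)=\int_{-\infty}^\infty f(x-y)G(y)\,dy$ is the product integral of $f(x-\cdot)$ and $G$. *)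

theory Defs
  imports "HOL-Analysis.Analysis"
begin

text \<open>C^0 of the extended real line: continuous with finite limits at both infinities.\<close>
definition C0_ext :: "(real \<Rightarrow> real) \<Rightarrow> bool" where
  "C0_ext F \<longleftrightarrow> continuous_on UNIV F \<and> (\<exists>l. (F \<longlongrightarrow> l) at_top) \<and> (\<exists>l. (F \<longlongrightarrow> l) at_bot)"

definition B_C :: "(real \<Rightarrow> real) \<Rightarrow> bool" where
  "B_C F \<longleftrightarrow> C0_ext F \<and> (F \<longlongrightarrow> 0) at_bot"

definition hs_has_integral_on :: "(real \<Rightarrow> real) \<Rightarrow> (real \<Rightarrow> real) \<Rightarrow> real \<Rightarrow> real \<Rightarrow> real \<Rightarrow> bool" where
  "hs_has_integral_on h g a b I \<longleftrightarrow>
     (\<forall>e>0. \<exists>\<gamma>. gauge \<gamma> \<and>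
        (\<forall>p. p tagged_division_of {a..b} \<and> \<gamma> fine p \<longrightarrow>
             \<bar>(\<Sum>(t,K)\<in>p. h t * (g (Sup K) - g (Inf K))) - I\<bar> < e))"

definition hs_integral_on :: "(real \<Rightarrow> real) \<Rightarrow> (real \<Rightarrow> real) \<Rightarrow> real \<Rightarrow> real \<Rightarrow> real" where
  "hs_integral_on h g a b = (THE I. hs_has_integral_on h g a b I)"

definition hs_has_integral_R :: "(real \<Rightarrow> real) \<Rightarrow> (real \<Rightarrow> real) \<Rightarrow> real \<Rightarrow> bool" where
  "hs_has_integral_R h g I \<longleftrightarrow>
     (\<forall>a b. a \<le> b \<longrightarrow> (\<exists>J. hs_has_integral_on h g a b J)) \<and>
     ((\<lambda>(a,b). hs_integral_on h g a b) \<longlongrightarrow> I) (at_bot \<times>\<^sub>F at_top)"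

definition hs_integral_R :: "(real \<Rightarrow> real) \<Rightarrow> (real \<Rightarrow> real) \<Rightarrow> real" where
  "hs_integral_R h g = (THE I. hs_has_integral_R h g I)"

text \<open>Primitive of the reflected distribution f(x - .), where F is the primitive of f.\<close>
definition refl_prim :: "(real \<Rightarrow> real) \<Rightarrow> real \<Rightarrow> real \<Rightarrow> real" where
  "refl_prim F x = (\<lambda>y. Lim at_top F - F (x - y))"

text \<open>Convolution f*G of f in A_C (given by its primitive F) with G of bounded variation,
  as the product integral: H(oo) G(oo) - int H dG.\<close>
definition conv_AC :: "(real \<Rightarrow> real) \<Rightarrow> (real \<Rightarrow> real) \<Rightarrow> real \<Rightarrow> real" where
  "conv_AC F G x = Lim at_top (refl_prim F x) * Lim at_top G - hs_integral_R (refl_prim F x) G"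

end

theory Submission
  imports Defs
begin

text \<open>
  Let \<open>H = F(\<infinity>) - F(x - \<cdot>)\<close> be the primitive of \<open>f(x - \<cdot>)\<close>; it is continuous and bounded.
  On a tagged piece \<open>[c,d]\<close> the Henstock--Stieltjes summand \<open>H(t)(G(d) - G(c))\<close> is the
  integral of \<open>H(t) g\<close> over \<open>[c,d]\<close>, so a tagged sum differs from \<open>\<integral>\<^sub>a\<^sup>b H g\<close> by at
  most the oscillation of \<open>H\<close> within the gauge times \<open>\<parallel>g\<parallel>\<^sub>1\<close>. Uniform continuity of \<open>H\<close>
  on \<open>[a,b]\<close> therefore makes \<open>\<integral> H dG\<close> the Lebesgue integral of \<open>H g\<close>, on compact
  intervals and then on the whole line, and
  \<open>f*G(x) = F(\<infinity>) G(\<infinity>) - \<integral> H g = \<integral> F(x - y) g(y) dy\<close>.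
  Continuity and the limits at \<open>\<plusminus>\<infinity>\<close> of the last integral follow from dominated
  convergence, since \<open>F\<close> is bounded.
\<close>

lemma C0_ext_bounded:
  assumes "C0_ext F"
  obtains M where "\<And>y. \<bar>F y\<bar> \<le> M"
proof -
  from assms obtain l0 l1 where c: "continuous_on UNIV F"
    and bot: "(F \<longlongrightarrow> l0) at_bot" and top: "(F \<longlongrightarrow> l1) at_top"
    unfolding C0_ext_def by blast
  have "eventually (\<lambda>y. \<bar>F y\<bar> < \<bar>l0\<bar> + 1) at_bot"
    using order_tendstoD(2)[OF tendsto_rabs[OF bot]] by simp
  then obtain a where a: "\<And>y. y \<le> a \<Longrightarrow> \<bar>F y\<bar> < \<bar>l0\<bar> + 1"
    by (auto simp: eventually_at_bot_linorder)
  have "eventually (\<lambda>y. \<bar>F y\<bar> < \<bar>l1\<bar> + 1) at_top"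
    using order_tendstoD(2)[OF tendsto_rabs[OF top]] by simp
  then obtain b where b: "\<And>y. y \<ge> b \<Longrightarrow> \<bar>F y\<bar> < \<bar>l1\<bar> + 1"
    by (auto simp: eventually_at_top_linorder)
  obtain B where B: "\<And>y. y \<in> {a..b} \<Longrightarrow> norm (F y) \<le> B"
    by (rule continuous_on_compact_bound[of "{a..b}" F]) (auto intro: continuous_on_subset[OF c])
  have "\<bar>F y\<bar> \<le> max B (max (\<bar>l0\<bar> + 1) (\<bar>l1\<bar> + 1))" for y
    using a[of y] b[of y] B[of y]
    by (cases "y \<le> a"; cases "y \<ge> b") (fastforce simp: le_max_iff_disj)+
  then show ?thesis by (rule that)
qed

lemma integrable_bounded_mult:
  fixes h g :: "'a \<Rightarrow> real"
  assumes "integrable N g" "h \<in> borel_measurable N" "\<And>y. \<bar>h y\<bar> \<le> M"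
  shows "integrable N (\<lambda>y. h y * g y)"
proof (rule Bochner_Integration.integrable_bound[where f="\<lambda>y. M * g y"])
  show "integrable N (\<lambda>y. M * g y)" using assms(1) by simp
  show "(\<lambda>y. h y * g y) \<in> borel_measurable N" using assms(1,2) by measurable
  have "\<bar>h y\<bar> \<le> \<bar>M\<bar>" for y using assms(3)[of y] by linarith
  then show "AE y in N. norm (h y * g y) \<le> norm (M * g y)"
    by (auto simp: abs_mult intro!: mult_right_mono)
qed

lemma continuous_on_imp_borel_measurable_lebesgue:
  "continuous_on UNIV h \<Longrightarrow> h \<in> borel_measurable lebesgue"
  by (intro measurable_completion) (simp add: borel_measurable_continuous_onI)

lemma tendsto_set_integral_atMost_at_top:
  fixes \<phi> :: "real \<Rightarrow> real"
  assumes "integrable lebesgue \<phi>"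
  shows "((\<lambda>x. LINT y:{..x}|lebesgue. \<phi> y) \<longlongrightarrow> (LINT y|lebesgue. \<phi> y)) at_top"
  unfolding set_lebesgue_integral_def
proof (rule integral_dominated_convergence_at_top[where w="\<lambda>y. norm (\<phi> y)"])
  show "AE y in lebesgue. ((\<lambda>x. indicator {..x} y *\<^sub>R \<phi> y) \<longlongrightarrow> \<phi> y) at_top"
  proof (rule AE_I2)
    fix y
    show "((\<lambda>x. indicator {..x} y *\<^sub>R \<phi> y) \<longlongrightarrow> \<phi> y) at_top"
      by (intro tendsto_eventually eventually_mono[OF eventually_ge_at_top[of y]]) auto
  qed
  show "\<forall>\<^sub>F x in at_top. AE y in lebesgue. norm (indicator {..x} y *\<^sub>R \<phi> y) \<le> norm (\<phi> y)"
    by (intro always_eventually allI AE_I2) (auto simp: indicator_def)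
qed (use assms in \<open>auto intro!: borel_measurable_times borel_measurable_indicator\<close>)

lemma tendsto_set_integral_atMost_at_bot:
  fixes \<phi> :: "real \<Rightarrow> real"
  assumes "integrable lebesgue \<phi>"
  shows "((\<lambda>x. LINT y:{..x}|lebesgue. \<phi> y) \<longlongrightarrow> 0) at_bot"
  unfolding filterlim_at_bot_mirror set_lebesgue_integral_def
proof -
  have "((\<lambda>x. LINT y|lebesgue. indicator {..-x} y *\<^sub>R \<phi> y) \<longlongrightarrow> (LINT y::real|lebesgue. 0::real)) at_top"
  proof (rule integral_dominated_convergence_at_top[where w="\<lambda>y. norm (\<phi> y)"])
    show "AE y in lebesgue. ((\<lambda>x. indicator {..-x} y *\<^sub>R \<phi> y) \<longlongrightarrow> 0) at_top"
    proof (rule AE_I2)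
      fix y
      show "((\<lambda>x. indicator {..-x} y *\<^sub>R \<phi> y) \<longlongrightarrow> 0) at_top"
        by (intro tendsto_eventually eventually_mono[OF eventually_gt_at_top[of "-y"]]) auto
    qed
    show "\<forall>\<^sub>F x in at_top. AE y in lebesgue. norm (indicator {..-x} y *\<^sub>R \<phi> y) \<le> norm (\<phi> y)"
      by (intro always_eventually allI AE_I2) (auto simp: indicator_def)
  qed (use assms in \<open>auto intro!: borel_measurable_times borel_measurable_indicator\<close>)
  then show "((\<lambda>x. LINT y|lebesgue. indicator {..-x} y *\<^sub>R \<phi> y) \<longlongrightarrow> 0) at_top"
    by simp
qed

lemma integral_Icc_eq_diff_set_integral_atMost:
  fixes \<phi> :: "real \<Rightarrow> real"
  assumes \<phi>: "integrable lebesgue \<phi>" and "c \<le> d"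
  shows "integral {c..d} \<phi> = (LINT y:{..d}|lebesgue. \<phi> y) - (LINT y:{..c}|lebesgue. \<phi> y)"
proof -
  have "(LINT y:{..d}|lebesgue. \<phi> y) - (LINT y:{..c}|lebesgue. \<phi> y)
      = (LINT y|lebesgue. indicator {..d} y *\<^sub>R \<phi> y - indicator {..c} y *\<^sub>R \<phi> y)"
    unfolding set_lebesgue_integral_def using \<phi>
    by (intro Bochner_Integration.integral_diff[symmetric] integrable_mult_indicator) auto
  also have "\<dots> = (LINT y:{c<..d}|lebesgue. \<phi> y)"
    unfolding set_lebesgue_integral_def using \<open>c \<le> d\<close>
    by (intro Bochner_Integration.integral_cong) (auto simp: indicator_def)
  also have "\<dots> = integral {c<..d} \<phi>"
    by (intro set_lebesgue_integral_eq_integral(2))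
      (unfold set_integrable_def, rule integrable_mult_indicator[OF _ \<phi>], simp)
  also have "\<dots> = integral {c..d} \<phi>"
    by (rule integral_spike_set) (auto intro: negligible_subset[of "{c}"])
  finally show ?thesis ..
qed

lemma tendsto_integral_Icc_at_bot_at_top:
  fixes \<phi> :: "real \<Rightarrow> real"
  assumes \<phi>: "integrable lebesgue \<phi>"
  shows "((\<lambda>(a,b). integral {a..b} \<phi>) \<longlongrightarrow> (LINT y|lebesgue. \<phi> y)) (at_bot \<times>\<^sub>F at_top)"
proof (rule Lim_transform_eventually)
  let ?\<Phi> = "\<lambda>x. LINT y:{..x}|lebesgue. \<phi> y"
  have "((\<lambda>p. ?\<Phi> (snd p) - ?\<Phi> (fst p)) \<longlongrightarrow> (LINT y|lebesgue. \<phi> y) - 0) (at_bot \<times>\<^sub>F at_top)"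
    by (intro tendsto_diff filterlim_compose[OF tendsto_set_integral_atMost_at_top[OF \<phi>] filterlim_snd]
        filterlim_compose[OF tendsto_set_integral_atMost_at_bot[OF \<phi>] filterlim_fst])
  then show "((\<lambda>p. ?\<Phi> (snd p) - ?\<Phi> (fst p)) \<longlongrightarrow> (LINT y|lebesgue. \<phi> y)) (at_bot \<times>\<^sub>F at_top)"
    by simp
  have "eventually (\<lambda>p::real \<times> real. fst p \<le> 0 \<and> 0 \<le> snd p) (at_bot \<times>\<^sub>F at_top)"
    by (intro eventually_prod_filter[THEN iffD2] exI[of _ "\<lambda>a. a \<le> 0"] exI[of _ "\<lambda>b. 0 \<le> b"])
      (auto intro: eventually_le_at_bot eventually_ge_at_top)
  then show "eventually (\<lambda>p. ?\<Phi> (snd p) - ?\<Phi> (fst p) = (\<lambda>(a,b). integral {a..b} \<phi>) p) (at_bot \<times>\<^sub>F at_top)"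
    by eventually_elim (auto simp: integral_Icc_eq_diff_set_integral_atMost[OF \<phi>])
qed

lemma hs_has_integral_on_unique:
  assumes "hs_has_integral_on h g a b I" "hs_has_integral_on h g a b J"
  shows "I = J"
proof (rule ccontr)
  let ?S = "\<lambda>p. \<Sum>(t,K)\<in>p. h t * (g (Sup K) - g (Inf K))"
  assume "I \<noteq> J"
  then have e: "\<bar>I - J\<bar> / 2 > 0" by simp
  obtain \<gamma>1 where "gauge \<gamma>1"
    and \<gamma>1: "\<And>p. p tagged_division_of {a..b} \<and> \<gamma>1 fine p \<Longrightarrow> \<bar>?S p - I\<bar> < \<bar>I - J\<bar> / 2"
    using assms(1) e unfolding hs_has_integral_on_def by meson
  obtain \<gamma>2 where "gauge \<gamma>2"
    and \<gamma>2: "\<And>p. p tagged_division_of {a..b} \<and> \<gamma>2 fine p \<Longrightarrow> \<bar>?S p - J\<bar> < \<bar>I - J\<bar> / 2"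
    using assms(2) e unfolding hs_has_integral_on_def by meson
  obtain p where "p tagged_division_of {a..b}" "(\<lambda>x. \<gamma>1 x \<inter> \<gamma>2 x) fine p"
    using fine_division_exists_real[OF gauge_Int[OF \<open>gauge \<gamma>1\<close> \<open>gauge \<gamma>2\<close>]] by blast
  then have "\<bar>?S p - I\<bar> < \<bar>I - J\<bar> / 2" "\<bar>?S p - J\<bar> < \<bar>I - J\<bar> / 2"
    using \<gamma>1 \<gamma>2 unfolding fine_Int by blast+
  moreover have "\<not> (\<bar>s - I\<bar> < \<bar>I - J\<bar> / 2 \<and> \<bar>s - J\<bar> < \<bar>I - J\<bar> / 2)" for s :: real
    by (simp add: abs_if)
  ultimately show False by blast
qed

lemma hs_integral_on_eqI: "hs_has_integral_on h g a b I \<Longrightarrow> hs_integral_on h g a b = I"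
  unfolding hs_integral_on_def using hs_has_integral_on_unique by blast

lemma hs_integral_R_eqI:
  assumes "hs_has_integral_R h g I"
  shows "hs_integral_R h g = I"
  unfolding hs_integral_R_def
proof (rule the_equality)
  have nontriv: "(at_bot \<times>\<^sub>F at_top :: (real \<times> real) filter) \<noteq> bot"
    by (simp add: prod_filter_eq_bot)
  show "J = I" if "hs_has_integral_R h g J" for J
    using that assms unfolding hs_has_integral_R_def by (blast intro: tendsto_unique[OF nontriv])
qed fact

lemma abs_const_mult_integral_diff_le:
  fixes H g :: "real \<Rightarrow> real"
  assumes g: "g absolutely_integrable_on K" and Hg: "(\<lambda>y. H y * g y) integrable_on K"
    and H: "\<And>y. y \<in> K \<Longrightarrow> \<bar>H t - H y\<bar> \<le> \<eta>"
  shows "\<bar>H t * integral K g - integral K (\<lambda>y. H y * g y)\<bar> \<le> \<eta> * integral K (\<lambda>y. \<bar>g y\<bar>)"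
proof -
  have gK: "g integrable_on K" "(\<lambda>y. \<bar>g y\<bar>) integrable_on K"
    using g unfolding absolutely_integrable_on_def by auto
  have cg: "(\<lambda>y. H t * g y) integrable_on K"
    using integrable_on_cmult_left[OF gK(1), of "H t"] by simp
  have "H t * integral K g - integral K (\<lambda>y. H y * g y) = integral K (\<lambda>y. (H t - H y) * g y)"
    using Henstock_Kurzweil_Integration.integral_diff[OF cg Hg] by (simp add: left_diff_distrib)
  also have "\<bar>\<dots>\<bar> \<le> integral K (\<lambda>y. \<eta> * \<bar>g y\<bar>)"
  proof (rule integral_norm_bound_integral[where f="\<lambda>y. (H t - H y) * g y", unfolded real_norm_def])
    show "(\<lambda>y. (H t - H y) * g y) integrable_on K"
      using Henstock_Kurzweil_Integration.integrable_diff[OF cg Hg] by (simp add: left_diff_distrib)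
    show "\<bar>(H t - H y) * g y\<bar> \<le> \<eta> * \<bar>g y\<bar>" if "y \<in> K" for y
      unfolding abs_mult using H[OF that] by (rule mult_right_mono) simp
  qed (use integrable_on_cmult_left[OF gK(2), of \<eta>] in simp)
  finally show ?thesis by simp
qed

lemma hs_sum_integral_diff_le:
  fixes H g G :: "real \<Rightarrow> real"
  assumes p: "p tagged_division_of {a..b}" "(\<lambda>t. ball t \<delta>) fine p"
    and H: "\<And>s t. s \<in> {a..b} \<Longrightarrow> t \<in> {a..b} \<Longrightarrow> dist s t < \<delta> \<Longrightarrow> \<bar>H s - H t\<bar> \<le> \<eta>"
    and g: "g absolutely_integrable_on {a..b}" and Hg: "(\<lambda>y. H y * g y) integrable_on {a..b}"
    and G: "\<And>c d. c \<le> d \<Longrightarrow> {c..d} \<subseteq> {a..b} \<Longrightarrow> G d - G c = integral {c..d} g"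
  shows "\<bar>(\<Sum>(t,K)\<in>p. H t * (G (Sup K) - G (Inf K))) - integral {a..b} (\<lambda>y. H y * g y)\<bar>
    \<le> \<eta> * integral {a..b} (\<lambda>y. \<bar>g y\<bar>)"
proof -
  let ?d = "\<lambda>(t,K). H t * (G (Sup K) - G (Inf K)) - integral K (\<lambda>y. H y * g y)"
  have piece: "\<bar>?d (t,K)\<bar> \<le> \<eta> * integral K (\<lambda>y. \<bar>g y\<bar>)" if tK: "(t,K) \<in> p" for t K
  proof -
    obtain c d where K: "K = {c..d}" using tagged_division_ofD(4)[OF p(1) tK] by auto
    have "t \<in> K" "K \<subseteq> {a..b}" "K \<subseteq> ball t \<delta>"
      using tagged_division_ofD(2,3)[OF p(1) tK] p(2) tK by (auto simp: fine_def)
    then have "c \<le> d" and sub: "{c..d} \<subseteq> {a..b}" using K by auto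
    have "\<bar>H t * integral K g - integral K (\<lambda>y. H y * g y)\<bar> \<le> \<eta> * integral K (\<lambda>y. \<bar>g y\<bar>)"
    proof (rule abs_const_mult_integral_diff_le)
      show "g absolutely_integrable_on K" using set_integrable_subset[OF g] sub K by simp
      show "(\<lambda>y. H y * g y) integrable_on K" using integrable_on_subinterval[OF Hg] sub K by simp
      show "\<bar>H t - H y\<bar> \<le> \<eta>" if "y \<in> K" for y
        using H[of t y] that \<open>t \<in> K\<close> \<open>K \<subseteq> ball t \<delta>\<close> sub K by auto
    qed
    then show ?thesis using G[OF \<open>c \<le> d\<close> sub] \<open>c \<le> d\<close> K by simp
  qed
  have "integral {a..b} (\<lambda>y. H y * g y) = (\<Sum>(t,K)\<in>p. integral K (\<lambda>y. H y * g y))"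
    using integral_combine_tagged_division_topdown[of _ a b p] Hg p(1) by simp
  then have "\<bar>(\<Sum>(t,K)\<in>p. H t * (G (Sup K) - G (Inf K))) - integral {a..b} (\<lambda>y. H y * g y)\<bar>
      = \<bar>\<Sum>x\<in>p. ?d x\<bar>"
    by (simp add: sum_subtractf case_prod_beta)
  also have "\<dots> \<le> (\<Sum>(t,K)\<in>p. \<eta> * integral K (\<lambda>y. \<bar>g y\<bar>))"
    using piece by (intro order_trans[OF sum_abs] sum_mono) auto
  also have "\<dots> = \<eta> * integral {a..b} (\<lambda>y. \<bar>g y\<bar>)"
    using integral_combine_tagged_division_topdown[of "\<lambda>y. \<bar>g y\<bar>" a b p] g p(1)
    by (simp add: sum_distrib_left case_prod_beta absolutely_integrable_on_def)
  finally show ?thesis .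
qed

lemma hs_has_integral_on_integral:
  fixes H g G :: "real \<Rightarrow> real"
  assumes H: "continuous_on {a..b} H" and g: "g absolutely_integrable_on {a..b}"
    and G: "\<And>c d. c \<le> d \<Longrightarrow> {c..d} \<subseteq> {a..b} \<Longrightarrow> G d - G c = integral {c..d} g"
  shows "hs_has_integral_on H G a b (integral {a..b} (\<lambda>y. H y * g y))"
  unfolding hs_has_integral_on_def
proof (intro allI impI)
  fix e :: real assume "e > 0"
  define N where "N = integral {a..b} (\<lambda>y. \<bar>g y\<bar>)"
  have "N \<ge> 0"
    using g unfolding N_def absolutely_integrable_on_def by (auto intro: integral_nonneg)
  define \<eta> where "\<eta> = e / (N + 1)"
  have "\<eta> > 0" "\<eta> * N < e"
    using \<open>e > 0\<close> \<open>N \<ge> 0\<close> by (auto simp: \<eta>_def field_simps)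
  obtain \<delta> where "\<delta> > 0"
    and \<delta>: "\<And>s t. s \<in> {a..b} \<Longrightarrow> t \<in> {a..b} \<Longrightarrow> dist s t < \<delta> \<Longrightarrow> dist (H s) (H t) < \<eta>"
    using compact_uniformly_continuous[OF H compact_Icc] \<open>\<eta> > 0\<close>
    unfolding uniformly_continuous_on_def by metis
  have "(\<lambda>y. H y * g y) absolutely_integrable_on {a..b}"
    by (intro absolutely_integrable_bounded_measurable_product_real g
        continuous_imp_measurable_on_sets_lebesgue H compact_imp_bounded compact_continuous_image)
      simp_all
  then have Hg: "(\<lambda>y. H y * g y) integrable_on {a..b}"
    unfolding absolutely_integrable_on_def by blast
  show "\<exists>\<gamma>. gauge \<gamma> \<and> (\<forall>p. p tagged_division_of {a..b} \<and> \<gamma> fine p \<longrightarrow>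
      \<bar>(\<Sum>(t,K)\<in>p. H t * (G (Sup K) - G (Inf K))) - integral {a..b} (\<lambda>y. H y * g y)\<bar> < e)"
  proof (intro exI[of _ "\<lambda>t. ball t \<delta>"] conjI allI impI)
    show "gauge (\<lambda>t. ball t \<delta>)" using \<open>\<delta> > 0\<close> by (rule gauge_ball)
    fix p assume "p tagged_division_of {a..b} \<and> (\<lambda>t. ball t \<delta>) fine p"
    then have "\<bar>(\<Sum>(t,K)\<in>p. H t * (G (Sup K) - G (Inf K))) - integral {a..b} (\<lambda>y. H y * g y)\<bar>
        \<le> \<eta> * N"
      unfolding N_def using \<delta>
      by (intro hs_sum_integral_diff_le g Hg G) (auto simp: dist_real_def less_imp_le)
    with \<open>\<eta> * N < e\<close>
    show "\<bar>(\<Sum>(t,K)\<in>p. H t * (G (Sup K) - G (Inf K))) - integral {a..b} (\<lambda>y. H y * g y)\<bar> < e"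
      by linarith
  qed
qed

lemma hs_has_integral_R_lebesgue:
  fixes H g G :: "real \<Rightarrow> real"
  assumes g: "integrable lebesgue g" and G: "\<And>x. G x = (LINT y:{..x}|lebesgue. g y)"
    and H: "continuous_on UNIV H" "\<And>y. \<bar>H y\<bar> \<le> M"
  shows "hs_has_integral_R H G (LINT y|lebesgue. H y * g y)"
proof -
  have on: "hs_has_integral_on H G a b (integral {a..b} (\<lambda>y. H y * g y))" for a b
  proof (rule hs_has_integral_on_integral)
    show "continuous_on {a..b} H" using H(1) by (rule continuous_on_subset) simp
    show "g absolutely_integrable_on {a..b}"
      unfolding set_integrable_def by (rule integrable_mult_indicator[OF _ g]) simp
    show "G d - G c = integral {c..d} g" if "c \<le> d" for c d
      using integral_Icc_eq_diff_set_integral_atMost[OF g that] G by simp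
  qed
  have "integrable lebesgue (\<lambda>y. H y * g y)"
    by (rule integrable_bounded_mult[OF g continuous_on_imp_borel_measurable_lebesgue[OF H(1)] H(2)])
  from tendsto_integral_Icc_at_bot_at_top[OF this]
  show ?thesis
    unfolding hs_has_integral_R_def hs_integral_on_eqI[OF on] using on by blast
qed

definition lebesgue_conv :: "(real \<Rightarrow> real) \<Rightarrow> (real \<Rightarrow> real) \<Rightarrow> real \<Rightarrow> real" where
  "lebesgue_conv F g x = (LINT y|lebesgue. F (x - y) * g y)"

lemma lebesgue_conv_sequentially:
  fixes F g :: "real \<Rightarrow> real" and X :: "nat \<Rightarrow> real"
  assumes g: "integrable lebesgue g" and F: "continuous_on UNIV F" "\<And>y. \<bar>F y\<bar> \<le> M"
    and lim: "\<And>y. (\<lambda>n. F (X n - y)) \<longlonglongrightarrow> \<phi> y"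
  shows "(\<lambda>n. lebesgue_conv F g (X n)) \<longlonglongrightarrow> (LINT y|lebesgue. \<phi> y * g y)"
  unfolding lebesgue_conv_def
proof (rule integral_dominated_convergence[where w="\<lambda>y. M * \<bar>g y\<bar>"])
  have F_shift: "(\<lambda>y. F (x - y)) \<in> borel_measurable lebesgue" for x
    by (intro continuous_on_imp_borel_measurable_lebesgue continuous_on_compose2[OF F(1)])
      (auto intro!: continuous_intros)
  then have "\<phi> \<in> borel_measurable lebesgue"
    using lim by (rule_tac borel_measurable_LIMSEQ_real[where u="\<lambda>n y. F (X n - y)"]) auto
  then show "(\<lambda>y. \<phi> y * g y) \<in> borel_measurable lebesgue"
    using g by measurable
  show "(\<lambda>y. F (X n - y) * g y) \<in> borel_measurable lebesgue" for n
    using F_shift g by measurable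
  show "AE y in lebesgue. (\<lambda>n. F (X n - y) * g y) \<longlonglongrightarrow> \<phi> y * g y"
    using lim by (intro AE_I2 tendsto_mult_right)
  show "AE y in lebesgue. norm (F (X n - y) * g y) \<le> M * \<bar>g y\<bar>" for n
    using F(2) by (auto simp: abs_mult intro!: AE_I2 mult_right_mono)
qed (use g in simp)

lemma continuous_on_lebesgue_conv:
  fixes F g :: "real \<Rightarrow> real"
  assumes g: "integrable lebesgue g" and F: "continuous_on UNIV F" "\<And>y. \<bar>F y\<bar> \<le> M"
  shows "continuous_on UNIV (lebesgue_conv F g)"
proof (rule continuous_on_sequentiallyI)
  fix u :: "nat \<Rightarrow> real" and x assume "u \<longlonglongrightarrow> x"
  then have "(\<lambda>n. F (u n - y)) \<longlonglongrightarrow> F (x - y)" for y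
    by (intro continuous_on_tendsto_compose[OF F(1)] tendsto_intros) auto
  from lebesgue_conv_sequentially[OF g F this]
  show "(\<lambda>n. lebesgue_conv F g (u n)) \<longlonglongrightarrow> lebesgue_conv F g x"
    by (simp add: lebesgue_conv_def)
qed

lemma lebesgue_conv_tendsto_at_top:
  fixes F g :: "real \<Rightarrow> real"
  assumes g: "integrable lebesgue g" and F: "continuous_on UNIV F" "\<And>y. \<bar>F y\<bar> \<le> M"
    and l: "(F \<longlongrightarrow> l) at_top"
  shows "(lebesgue_conv F g \<longlongrightarrow> l * (LINT y|lebesgue. g y)) at_top"
proof (rule tendsto_at_topI_sequentially)
  fix X :: "nat \<Rightarrow> real" assume X: "filterlim X at_top sequentially"
  have "filterlim (\<lambda>n. - y + X n) at_top sequentially" for y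
    using filterlim_tendsto_add_at_top_iff[OF tendsto_const] X by blast
  then have "(\<lambda>n. F (X n - y)) \<longlonglongrightarrow> l" for y
    by (intro filterlim_compose[OF l]) simp
  from lebesgue_conv_sequentially[OF g F this]
  show "(\<lambda>n. lebesgue_conv F g (X n)) \<longlonglongrightarrow> l * (LINT y|lebesgue. g y)"
    by simp
qed

lemma lebesgue_conv_tendsto_at_bot:
  fixes F g :: "real \<Rightarrow> real"
  assumes g: "integrable lebesgue g" and F: "continuous_on UNIV F" "\<And>y. \<bar>F y\<bar> \<le> M"
    and l: "(F \<longlongrightarrow> l) at_bot"
  shows "(lebesgue_conv F g \<longlongrightarrow> l * (LINT y|lebesgue. g y)) at_bot"
proof (rule tendsto_at_botI_sequentially)
  fix X :: "nat \<Rightarrow> real" assume X: "filterlim X at_bot sequentially"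
  have "filterlim (\<lambda>n. - y + X n) at_bot sequentially" for y
    using filterlim_tendsto_add_at_bot_iff[OF tendsto_const] X by blast
  then have "(\<lambda>n. F (X n - y)) \<longlonglongrightarrow> l" for y
    by (intro filterlim_compose[OF l]) simp
  from lebesgue_conv_sequentially[OF g F this]
  show "(\<lambda>n. lebesgue_conv F g (X n)) \<longlonglongrightarrow> l * (LINT y|lebesgue. g y)"
    by simp
qed

lemma C0_ext_lebesgue_conv:
  assumes F: "C0_ext F" and g: "integrable lebesgue g"
  shows "C0_ext (lebesgue_conv F g)"
proof -
  obtain M where M: "\<And>y. \<bar>F y\<bar> \<le> M" using C0_ext_bounded[OF F] by blast
  from F obtain l0 l1 where c: "continuous_on UNIV F"
    and "(F \<longlongrightarrow> l0) at_bot" "(F \<longlongrightarrow> l1) at_top"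
    unfolding C0_ext_def by blast
  then show ?thesis
    unfolding C0_ext_def
    by (blast intro: continuous_on_lebesgue_conv[OF g c M] lebesgue_conv_tendsto_at_top[OF g c M]
        lebesgue_conv_tendsto_at_bot[OF g c M])
qed

lemma hs_has_integral_R_refl_prim:
  fixes F g G :: "real \<Rightarrow> real"
  assumes F: "C0_ext F" and g: "integrable lebesgue g"
    and G: "\<And>x. G x = (LINT y:{..x}|lebesgue. g y)"
  shows "hs_has_integral_R (refl_prim F x) G
           (Lim at_top F * (LINT y|lebesgue. g y) - lebesgue_conv F g x)"
proof -
  obtain M where M: "\<And>y. \<bar>F y\<bar> \<le> M" using C0_ext_bounded[OF F] by blast
  have Fc: "continuous_on UNIV F" using F by (simp add: C0_ext_def)
  have Fx_cont: "continuous_on UNIV (\<lambda>y. F (x - y))"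
    by (intro continuous_on_compose2[OF Fc]) (auto intro!: continuous_intros)
  then have Fx: "integrable lebesgue (\<lambda>y. F (x - y) * g y)"
    using M by (intro integrable_bounded_mult[OF g continuous_on_imp_borel_measurable_lebesgue])
  have "continuous_on UNIV (refl_prim F x)"
    unfolding refl_prim_def by (intro continuous_on_diff continuous_on_const Fx_cont)
  moreover have "\<bar>refl_prim F x y\<bar> \<le> \<bar>Lim at_top F\<bar> + M" for y
    using M[of "x - y"] unfolding refl_prim_def by linarith
  ultimately have "hs_has_integral_R (refl_prim F x) G (LINT y|lebesgue. refl_prim F x y * g y)"
    by (rule hs_has_integral_R_lebesgue[OF g G])
  moreover have "(LINT y|lebesgue. refl_prim F x y * g y)
      = Lim at_top F * (LINT y|lebesgue. g y) - lebesgue_conv F g x"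
    using g Fx unfolding refl_prim_def lebesgue_conv_def by (simp add: left_diff_distrib)
  ultimately show ?thesis by simp
qed

lemma conv_AC_eq_lebesgue_conv:
  fixes F g G :: "real \<Rightarrow> real"
  assumes F: "B_C F" and g: "integrable lebesgue g"
    and G: "\<And>x. G x = (LINT y:{..x}|lebesgue. g y)"
  shows "conv_AC F G x = lebesgue_conv F g x"
proof -
  have F0: "(F \<longlongrightarrow> 0) at_bot" using F unfolding B_C_def by blast
  have "filterlim (\<lambda>y. x + - y) at_bot at_top"
    by (subst filterlim_tendsto_add_at_bot_iff[OF tendsto_const]) (rule filterlim_uminus_at_bot_at_top)
  then have "(refl_prim F x \<longlongrightarrow> Lim at_top F - 0) at_top"
    unfolding refl_prim_def by (intro tendsto_diff tendsto_const filterlim_compose[OF F0]) simp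
  then have HL: "Lim at_top (refl_prim F x) = Lim at_top F" by (simp add: tendsto_Lim)
  have "G = (\<lambda>x. LINT y:{..x}|lebesgue. g y)" using G by blast
  then have GL: "Lim at_top G = (LINT y|lebesgue. g y)"
    using tendsto_set_integral_atMost_at_top[OF g] by (simp add: tendsto_Lim)
  have "hs_integral_R (refl_prim F x) G
      = Lim at_top F * (LINT y|lebesgue. g y) - lebesgue_conv F g x"
    using F unfolding B_C_def by (intro hs_integral_R_eqI hs_has_integral_R_refl_prim g G) blast
  then show ?thesis by (simp add: conv_AC_def HL GL)
qed

theorem mainTheorem13:
  fixes F g G :: "real \<Rightarrow> real"
  assumes F: "B_C F"
    and g: "integrable lebesgue g"
    and G: "\<And>x. G x = (LINT y:{..x}|lebesgue. g y)"
  shows "C0_ext (conv_AC F G) \<and>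
         (\<forall>x. hs_has_integral_R (refl_prim F x) G (hs_integral_R (refl_prim F x) G)) \<and>
         (\<forall>x. conv_AC F G x = (LINT y|lebesgue. F (x - y) * g y))"
proof -
  have F': "C0_ext F" using F unfolding B_C_def by blast
  have "hs_has_integral_R (refl_prim F x) G (hs_integral_R (refl_prim F x) G)" for x
  proof -
    note HS = hs_has_integral_R_refl_prim[OF F' g G, of x]
    show ?thesis using HS unfolding hs_integral_R_eqI[OF HS] .
  qed
  moreover have "conv_AC F G = lebesgue_conv F g"
    using conv_AC_eq_lebesgue_conv[OF F g G] by blast
  ultimately show ?thesis
    using C0_ext_lebesgue_conv[OF F' g] by (simp add: lebesgue_conv_def)
qed

end
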